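(* Consider the ARQ protocol without feedback described in the context. Let $\mathcal{T}^*_{\mathcal{P}_2}$ be the optimal value and $\Psi^*_{\mathcal{P}_2}$ an optimal policy of problem $\mathcal{P}_2$: maximize the throughput $\mathcal{T}(\Psi)$ over all admissible policies $\Psi$. If $\mathcal{T}^*_{\mathcal{P}_2}<\mathcal{T}_{\rm th}$, then problem $\mathcal{P}_1$ (minimize the packet drop probability $p_{\rm drop}(\Psi)$ over admissible policies subject to $\mathcal{T}(\Psi)\ge \mathcal{T}_{\rm th}$) is infeasible. Otherwise, $\Psi^*_{\mathcal{P}_2}$ is an optimal solution of $\mathcal{P}_1$.
   Context: System model. Time is slotted, $t=1,2,\dots$. The channel power gains $|h_t|^2$ are i.i.d. across slots with CDF $F_H$. A non-energy-harvesting transmitter sends packets at fixed rate $R$ and power $p_{\rm tx}$; let $|h_{\rm th}|^2=(2^R-1)/p_{\rm tx}$, $p_c=1-F_H(|h_{\rm th}|^2)$ and $\bar p_c=1-p_c$. Each packet may be transmitted at most $K>1$ times; $k_t\in\{0,1,\dots,K-1\}$ is the transmission index (the packet is in its $(k_t+1)$th transmission in slot $t$). The receiver harvests energy $E_{H,t}$ at the start of slot $t$, with $E_{H,t}$ i.i.d. taking values in a finite set of nonnegative integer multiples of an energy quantum $E$. Its battery level evolves as $b_{t+1}=\min\{b_t-E_{c,t}+E_{H,t+1},B_{\max}\}$, $b_1=E_{H,1}$, where $E_{c,t}$ is the energy consumed in slot $t$ and $B_{\max}$ is a finite multiple of $E$. Sampling a packet costs $E_{\rm s}$, decoding costs $E_{\rm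 d}$ (both positive multiples of $E$). In slot $t$ the receiver chooses $a_{s,t}\in\{0,1\}$ (sample or not). If it samples, it consumes $E_{\rm s}$; if moreover $|h_t|^2\ge|h_{\rm th}|^2$ (probability $p_c$, independently of the past), it decodes the packet correctly and consumes an additional $E_{\rm d}$; otherwise the sample is discarded with no further energy cost. The reception state $i_t\in\{0,1\}$ equals $1$ iff the packet currently being transmitted has already been decoded correctly. The system state is $\mathbf{s}_t=(b_t,k_t,i_t)$. ARQ without feedback: no acknowledgement is ever sent, so the transmitter starts a new packet every $K$ slots ($k_{t+1}=(k_t+1)\bmod K$, and $i_{t+1}=0$ whenever $k_{t+1}=0$). Admissible actions: $a_{s,t}=1$ is allowed only if $i_t=0$ and $b_t\ge E_{\rm s}+E_{\rm d}$; otherwise $a_{s,t}=0$. A policy $\Psi$ chooses actions based on the system state. Performance metrics: let $S_t$ be the event that a packet is decoded correctly in slot $t$, $N_t$ the event that a new packet starts in slot $t$, and $D_t$ the event that a packet is dropped in slot $t$ (i.e., $k_t=K-1$ and the packet has not been decoded correctly by the end of slot $t$). Throughput: $\mathcal{T}(\Psi)=\lim_{T\to\infty}\frac1T\mathbb{E}[\sum_{t=1}^T\mathbf{1}_{S_t}]$. Packet drop probability: $p_{\rm drop}(\Psi)=\frac{\lim_{T\to\infty}\frac1T\mathbb{E}[\sum_{t=1}^T\mathbf{1}_{D_t}]}{\lim_{T\to\infty}\frac1T\mathbb{E}[\sum_{t=1}^T\mathbf{1}_{N_t}]}$, where the limits are assumed to exist. $\mathcal{T}_{\rm th}$ is a given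 throughput requirement. *)

theory Defs
  imports "HOL-Probability.Probability"
begin

text \<open>All energies are measured in units of the energy quantum E (so they are natural numbers).
  System state (b, k, i): battery level b, transmission index k in {0..K-1},
  reception state i (True iff the current packet has already been decoded correctly).\<close>

type_synonym arq_state = "nat \<times> nat \<times> bool"

text \<open>A (stationary, deterministic) policy maps the system state to the sampling action.\<close>
type_synonym arq_policy = "arq_state \<Rightarrow> bool"

definition is_cdf :: "(real \<Rightarrow> real) \<Rightarrow> bool" where
  "is_cdf F \<longleftrightarrow> mono F \<and> (\<forall>x. 0 \<le> F x \<and> F x \<le> 1)
     \<and> (\<forall>x. continuous (at_right x) F)
     \<and> (F \<longlongrightarrow> 0) at_bot \<and> (F \<longlongrightarrow> 1) at_top"

definition h_th :: "real \<Rightarrow> real \<Rightarrow> real" where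
  "h_th R ptx = (2 powr R - 1) / ptx"

definition p_c :: "(real \<Rightarrow> real) \<Rightarrow> real \<Rightarrow> real \<Rightarrow> real" where
  "p_c F R ptx = 1 - F (h_th R ptx)"

definition admissible :: "nat \<Rightarrow> nat \<Rightarrow> arq_policy \<Rightarrow> bool" where
  "admissible Es Ed \<Psi> \<longleftrightarrow>
     (\<forall>b k i. \<Psi> (b, k, i) \<longrightarrow> (\<not> i \<and> b \<ge> Es + Ed))"

text \<open>One slot: given the current state, returns the distribution of
  (next state, S_t, D_t), where S_t = packet decoded correctly in this slot,
  D_t = packet dropped in this slot.\<close>
definition arq_step ::
  "nat \<Rightarrow> real \<Rightarrow> nat pmf \<Rightarrow> nat \<Rightarrow> nat \<Rightarrow> nat \<Rightarrow> arq_policy \<Rightarrow> arq_state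
     \<Rightarrow> (arq_state \<times> bool \<times> bool) pmf" where
  "arq_step K pc EH Bmax Es Ed \<Psi> s =
     (case s of (b, k, i) \<Rightarrow>
       do {
         good \<leftarrow> bernoulli_pmf pc;
         eh \<leftarrow> EH;
         let a = \<Psi> (b, k, i);
         let succ = (a \<and> good);
         let Ec = (if a then (if good then Es + Ed else Es) else 0);
         let i' = (i \<or> succ);
         let k' = (k + 1) mod K;
         let i'' = (if k' = 0 then False else i');
         let b' = min (b - Ec + eh) Bmax;
         let drop = (k = K - 1 \<and> \<not> i');
         return_pmf ((b', k', i''), succ, drop)
       })"

text \<open>Distribution of the state in slot t+1 (b_1 = E_{H,1}, k_1 = 0, i_1 = 0).\<close>
fun arq_dist ::
  "nat \<Rightarrow> real \<Rightarrow> nat pmf \<Rightarrow> nat \<Rightarrow> nat \<Rightarrow> nat \<Rightarrow> arq_policy \<Rightarrow> nat \<Rightarrow> arq_state pmf" where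
  "arq_dist K pc EH Bmax Es Ed \<Psi> 0 = map_pmf (\<lambda>e. (e, 0, False)) EH"
| "arq_dist K pc EH Bmax Es Ed \<Psi> (Suc t) =
     map_pmf fst (bind_pmf (arq_dist K pc EH Bmax Es Ed \<Psi> t) (arq_step K pc EH Bmax Es Ed \<Psi>))"

definition arq_slot ::
  "nat \<Rightarrow> real \<Rightarrow> nat pmf \<Rightarrow> nat \<Rightarrow> nat \<Rightarrow> nat \<Rightarrow> arq_policy \<Rightarrow> nat
     \<Rightarrow> (arq_state \<times> (arq_state \<times> bool \<times> bool)) pmf" where
  "arq_slot K pc EH Bmax Es Ed \<Psi> t =
     bind_pmf (arq_dist K pc EH Bmax Es Ed \<Psi> t)
       (\<lambda>s. map_pmf (\<lambda>x. (s, x)) (arq_step K pc EH Bmax Es Ed \<Psi> s))"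

definition avg_S where
  "avg_S K pc EH Bmax Es Ed \<Psi> (n::nat) =
     (\<Sum>t<n. measure_pmf.prob (arq_slot K pc EH Bmax Es Ed \<Psi> t) {x. fst (snd (snd x))}) / real n"

definition avg_D where
  "avg_D K pc EH Bmax Es Ed \<Psi> (n::nat) =
     (\<Sum>t<n. measure_pmf.prob (arq_slot K pc EH Bmax Es Ed \<Psi> t) {x. snd (snd (snd x))}) / real n"

definition avg_N where
  "avg_N K pc EH Bmax Es Ed \<Psi> (n::nat) =
     (\<Sum>t<n. measure_pmf.prob (arq_slot K pc EH Bmax Es Ed \<Psi> t) {x. fst (snd (fst x)) = 0}) / real n"

definition throughput where
  "throughput K pc EH Bmax Es Ed \<Psi> = lim (avg_S K pc EH Bmax Es Ed \<Psi>)"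

definition p_drop where
  "p_drop K pc EH Bmax Es Ed \<Psi> =
     lim (avg_D K pc EH Bmax Es Ed \<Psi>) / lim (avg_N K pc EH Bmax Es Ed \<Psi>)"

definition P2_optimal where
  "P2_optimal K pc EH Bmax Es Ed \<Psi> \<longleftrightarrow> admissible Es Ed \<Psi> \<and>
     (\<forall>\<Phi>. admissible Es Ed \<Phi> \<longrightarrow>
        throughput K pc EH Bmax Es Ed \<Phi> \<le> throughput K pc EH Bmax Es Ed \<Psi>)"

definition P1_feasible where
  "P1_feasible K pc EH Bmax Es Ed Tth \<Psi> \<longleftrightarrow> admissible Es Ed \<Psi> \<and>
     throughput K pc EH Bmax Es Ed \<Psi> \<ge> Tth"

definition P1_optimal where
  "P1_optimal K pc EH Bmax Es Ed Tth \<Psi> \<longleftrightarrow> P1_feasible K pc EH Bmax Es Ed Tth \<Psi> \<and>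
     (\<forall>\<Phi>. P1_feasible K pc EH Bmax Es Ed Tth \<Phi> \<longrightarrow>
        p_drop K pc EH Bmax Es Ed \<Psi> \<le> p_drop K pc EH Bmax Es Ed \<Phi>)"

end

theory Submission
  imports Defs
begin

text \<open>Under an admissible policy a packet is never sampled after it has been decoded, so every slot
  satisfies the conservation law \<open>1[S_t] + 1[D_t] + 1[i_t] = 1[i_(t+1)] + 1[k_t = K - 1]\<close>: a packet
  leaves the system in its last slot either decoded or dropped. Taking expectations and telescoping,
  the time averages of \<open>S\<close> and \<open>D\<close> add up, in the limit, to the fraction \<open>L\<close> of slots with
  \<open>t mod K = K - 1\<close>, while the average of \<open>N\<close> is the fraction \<open>N\<close> of slots with \<open>t mod K = 0\<close>.
  Both fractions are independent of the policy, so \<open>p_drop = (L - throughput) / N\<close> is a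
  nonincreasing function of the throughput, and a throughput maximiser solves \<open>P1\<close> whenever
  \<open>P1\<close> is feasible at all.\<close>

lemma arq_step_support:
  assumes "y \<in> set_pmf (arq_step K pc EH Bmax Es Ed \<Psi> (b, k, i))"
  shows "\<exists>good b'. y = ((b', (k + 1) mod K, if (k + 1) mod K = 0 then False else i \<or> \<Psi> (b, k, i) \<and> good),
      \<Psi> (b, k, i) \<and> good, k = K - 1 \<and> \<not> (i \<or> \<Psi> (b, k, i) \<and> good))"
  using assms unfolding arq_step_def by (auto simp: Let_def set_bind_pmf)

lemma arq_step_outcome:
  assumes "((b', k', i'), succ, dropped) \<in> set_pmf (arq_step K pc EH Bmax Es Ed \<Psi> (b, k, i))"
  shows "k' = Suc k mod K" and "succ \<Longrightarrow> \<Psi> (b, k, i)"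
    and "i' \<longleftrightarrow> k' \<noteq> 0 \<and> (i \<or> succ)" and "dropped \<longleftrightarrow> k = K - 1 \<and> \<not> (i \<or> succ)"
proof -
  obtain good where "k' = Suc k mod K" "succ = (\<Psi> (b, k, i) \<and> good)"
    "i' = (if k' = 0 then False else i \<or> succ)" "dropped = (k = K - 1 \<and> \<not> (i \<or> succ))"
    using arq_step_support[OF assms] by auto
  then show "k' = Suc k mod K" "succ \<Longrightarrow> \<Psi> (b, k, i)"
    "i' \<longleftrightarrow> k' \<noteq> 0 \<and> (i \<or> succ)" "dropped \<longleftrightarrow> k = K - 1 \<and> \<not> (i \<or> succ)"
    by simp_all
qed

lemma arq_dist_index:
  assumes "(b, k, i) \<in> set_pmf (arq_dist K pc EH Bmax Es Ed \<Psi> t)"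
  shows "k = t mod K"
  using assms
proof (induction t arbitrary: b k i)
  case 0
  then show ?case by auto
next
  case (Suc t)
  then obtain b0 k0 i0 succ dropped where
    prev: "(b0, k0, i0) \<in> set_pmf (arq_dist K pc EH Bmax Es Ed \<Psi> t)" and
    step: "((b, k, i), succ, dropped) \<in> set_pmf (arq_step K pc EH Bmax Es Ed \<Psi> (b0, k0, i0))"
    by (auto simp: set_bind_pmf)
  have "k0 = t mod K" and "k = Suc k0 mod K"
    using Suc.IH[OF prev] arq_step_outcome(1)[OF step] by simp_all
  then show ?case
    by (simp add: mod_Suc_eq)
qed

lemma arq_step_balance:
  assumes "admissible Es Ed \<Psi>" and "k < K"
    and step: "((b', k', i'), succ, dropped) \<in> set_pmf (arq_step K pc EH Bmax Es Ed \<Psi> (b, k, i))"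
  shows "of_bool succ + of_bool dropped + of_bool i = of_bool i' + (of_bool (k = K - 1) :: 'a::semiring_1)"
proof -
  have "succ \<Longrightarrow> \<not> i"
    using assms(1) arq_step_outcome(2)[OF step] unfolding admissible_def by blast
  moreover have "k' = 0 \<longleftrightarrow> k = K - 1"
    using \<open>k < K\<close> arq_step_outcome(1)[OF step] by (cases "Suc k = K") auto
  ultimately show ?thesis
    using arq_step_outcome(3,4)[OF step] by (cases succ; cases i; cases "k = K - 1") simp_all
qed

lemma emeasure_pmf_Collect:
  "emeasure (measure_pmf M) {x. P x} = (\<integral>\<^sup>+x. of_bool (P x) \<partial>M)"
  by (simp add: indicator_def flip: nn_integral_indicator)

lemma nn_integral_pmf_balance:
  fixes f g h u :: "'a \<Rightarrow> ennreal"
  assumes "\<And>x. x \<in> set_pmf M \<Longrightarrow> f x + g x + h x = u x + c"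
  shows "(\<integral>\<^sup>+x. f x \<partial>M) + (\<integral>\<^sup>+x. g x \<partial>M) + (\<integral>\<^sup>+x. h x \<partial>M) = (\<integral>\<^sup>+x. u x \<partial>M) + c"
proof -
  have "(\<integral>\<^sup>+x. f x \<partial>M) + (\<integral>\<^sup>+x. g x \<partial>M) + (\<integral>\<^sup>+x. h x \<partial>M) = (\<integral>\<^sup>+x. f x + g x + h x \<partial>M)"
    by (simp add: nn_integral_add)
  also have "\<dots> = (\<integral>\<^sup>+x. u x + c \<partial>M)"
    by (intro nn_integral_cong_AE AE_pmfI) (rule assms)
  also have "\<dots> = (\<integral>\<^sup>+x. u x \<partial>M) + c"
    by (simp add: nn_integral_add measure_pmf.emeasure_space_1)
  finally show ?thesis .
qed

lemma arq_prob_balance: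
  assumes "admissible Es Ed \<Psi>" and "K > 0"
  shows "measure_pmf.prob (arq_slot K pc EH Bmax Es Ed \<Psi> t) {x. fst (snd (snd x))}
       + measure_pmf.prob (arq_slot K pc EH Bmax Es Ed \<Psi> t) {x. snd (snd (snd x))}
       + measure_pmf.prob (arq_dist K pc EH Bmax Es Ed \<Psi> t) {s. snd (snd s)}
     = measure_pmf.prob (arq_dist K pc EH Bmax Es Ed \<Psi> (Suc t)) {s. snd (snd s)}
       + of_bool (t mod K = K - 1)"
proof -
  define D where "D = arq_dist K pc EH Bmax Es Ed \<Psi> t"
  define step where "step = arq_step K pc EH Bmax Es Ed \<Psi>"
  have slot: "emeasure (arq_slot K pc EH Bmax Es Ed \<Psi> t) {x. P (snd x)}
      = (\<integral>\<^sup>+s. emeasure (step s) {y. P y} \<partial>D)" for P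
    unfolding arq_slot_def D_def step_def by (simp add: vimage_def)
  have next_slot: "emeasure (arq_dist K pc EH Bmax Es Ed \<Psi> (Suc t)) {s. P s}
      = (\<integral>\<^sup>+s. emeasure (step s) {y. P (fst y)} \<partial>D)" for P
    unfolding D_def step_def by (simp add: vimage_def)
  have "emeasure (step s) {y. fst (snd y)} + emeasure (step s) {y. snd (snd y)} + of_bool (snd (snd s))
      = emeasure (step s) {y. snd (snd (fst y))} + of_bool (t mod K = K - 1)"
    if "s \<in> set_pmf D" for s
  proof -
    obtain b k i where s: "s = (b, k, i)" by (cases s)
    have "k = t mod K"
      using arq_dist_index that unfolding D_def s by blast
    then have "k < K" using \<open>K > 0\<close> by simp
    have "(\<integral>\<^sup>+y. of_bool (fst (snd y)) \<partial>step s) + (\<integral>\<^sup>+y. of_bool (snd (snd y)) \<partial>step s)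
        + (\<integral>\<^sup>+_. of_bool i \<partial>step s)
      = (\<integral>\<^sup>+y. of_bool (snd (snd (fst y))) \<partial>step s) + of_bool (k = K - 1)"
    proof (rule nn_integral_pmf_balance)
      fix y assume "y \<in> set_pmf (step s)"
      then have "((fst (fst y), fst (snd (fst y)), snd (snd (fst y))), fst (snd y), snd (snd y))
          \<in> set_pmf (arq_step K pc EH Bmax Es Ed \<Psi> (b, k, i))"
        by (simp add: step_def s)
      from arq_step_balance[OF assms(1) \<open>k < K\<close> this]
      show "of_bool (fst (snd y)) + of_bool (snd (snd y)) + of_bool i
          = of_bool (snd (snd (fst y))) + (of_bool (k = K - 1) :: ennreal)" .
    qed
    then show ?thesis
      by (simp add: emeasure_pmf_Collect s \<open>k = t mod K\<close> measure_pmf.emeasure_space_1)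
  qed
  then have "emeasure (arq_slot K pc EH Bmax Es Ed \<Psi> t) {x. fst (snd (snd x))}
       + emeasure (arq_slot K pc EH Bmax Es Ed \<Psi> t) {x. snd (snd (snd x))}
       + emeasure D {s. snd (snd s)}
     = emeasure (arq_dist K pc EH Bmax Es Ed \<Psi> (Suc t)) {s. snd (snd s)} + of_bool (t mod K = K - 1)"
    unfolding slot[of "\<lambda>y. fst (snd y)"] slot[of "\<lambda>y. snd (snd y)"] next_slot
      emeasure_pmf_Collect[of D]
    by (rule nn_integral_pmf_balance)
  then show ?thesis
    unfolding D_def measure_pmf.emeasure_eq_measure
    by (cases "t mod K = K - 1") (simp_all del: arq_dist.simps flip: ennreal_plus ennreal_1)
qed

lemma arq_sum_success_drop:
  assumes "admissible Es Ed \<Psi>" and "K > 0"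
  shows "(\<Sum>t<n. measure_pmf.prob (arq_slot K pc EH Bmax Es Ed \<Psi> t) {x. fst (snd (snd x))})
       + (\<Sum>t<n. measure_pmf.prob (arq_slot K pc EH Bmax Es Ed \<Psi> t) {x. snd (snd (snd x))})
     = measure_pmf.prob (arq_dist K pc EH Bmax Es Ed \<Psi> n) {s. snd (snd s)}
       + (\<Sum>t<n. of_bool (t mod K = K - 1))"
proof (induction n)
  case 0
  have "measure_pmf.prob (arq_dist K pc EH Bmax Es Ed \<Psi> 0) {s. snd (snd s)} = 0"
    by (subst measure_pmf_zero_iff) auto
  then show ?case by simp
next
  case (Suc n)
  then show ?case
    using arq_prob_balance[OF assms, of pc EH Bmax n] by (simp del: arq_dist.simps)
qed

lemma arq_prob_new_packet:
  "measure_pmf.prob (arq_slot K pc EH Bmax Es Ed \<Psi> t) {x. fst (snd (fst x)) = 0}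
     = of_bool (t mod K = 0)"
proof -
  have index: "fst (snd (fst x)) = t mod K" if "x \<in> set_pmf (arq_slot K pc EH Bmax Es Ed \<Psi> t)" for x
    using that arq_dist_index[of "fst (fst x)" "fst (snd (fst x))" "snd (snd (fst x))"]
    unfolding arq_slot_def by (auto simp: set_bind_pmf)
  show ?thesis
  proof (cases "t mod K = 0")
    case True
    then show ?thesis
      using index by (simp add: measure_pmf.prob_eq_1 AE_pmfI)
  next
    case False
    then show ?thesis
      using index by (force simp: measure_pmf_zero_iff)
  qed
qed

definition residue_frequency :: "nat \<Rightarrow> nat \<Rightarrow> nat \<Rightarrow> real" where
  "residue_frequency K r n = (\<Sum>t<n. of_bool (t mod K = r)) / real n"

lemma avg_N_eq_residue_frequency:
  "avg_N K pc EH Bmax Es Ed \<Psi> = residue_frequency K 0"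
  by (simp add: fun_eq_iff avg_N_def residue_frequency_def arq_prob_new_packet)

lemma avg_S_plus_avg_D:
  assumes "admissible Es Ed \<Psi>" and "K > 0"
  shows "avg_S K pc EH Bmax Es Ed \<Psi> n + avg_D K pc EH Bmax Es Ed \<Psi> n
     = measure_pmf.prob (arq_dist K pc EH Bmax Es Ed \<Psi> n) {s. snd (snd s)} / real n
       + residue_frequency K (K - 1) n"
  unfolding avg_S_def avg_D_def residue_frequency_def add_divide_distrib[symmetric]
  using arq_sum_success_drop[OF assms] by simp

lemma residue_frequency_drop_tendsto:
  assumes "admissible Es Ed \<Psi>" and "K > 0"
    and "convergent (avg_S K pc EH Bmax Es Ed \<Psi>)" and "convergent (avg_D K pc EH Bmax Es Ed \<Psi>)"
  shows "residue_frequency K (K - 1)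
     \<longlonglongrightarrow> throughput K pc EH Bmax Es Ed \<Psi> + lim (avg_D K pc EH Bmax Es Ed \<Psi>)"
proof -
  define f where "f n = measure_pmf.prob (arq_dist K pc EH Bmax Es Ed \<Psi> n) {s. snd (snd s)} / real n" for n
  have "f \<longlonglongrightarrow> 0"
  proof (rule real_tendsto_sandwich[where f = "\<lambda>_. 0" and h = "\<lambda>n. 1 / real n"])
    show "\<forall>\<^sub>F n in sequentially. f n \<le> 1 / real n"
      by (auto simp: f_def divide_right_mono)
  qed (auto simp: f_def lim_const_over_n)
  moreover have "residue_frequency K (K - 1)
      = (\<lambda>n. avg_S K pc EH Bmax Es Ed \<Psi> n + avg_D K pc EH Bmax Es Ed \<Psi> n - f n)"
    using avg_S_plus_avg_D[OF assms(1,2)] unfolding f_def by fastforce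
  ultimately show ?thesis
    using assms(3,4) tendsto_diff[OF tendsto_add, of _ _ sequentially _ _ f 0]
    unfolding throughput_def convergent_LIMSEQ_iff by auto
qed

lemma p_drop_eq:
  assumes "admissible Es Ed \<Psi>" and "K > 0"
    and "convergent (avg_S K pc EH Bmax Es Ed \<Psi>)" and "convergent (avg_D K pc EH Bmax Es Ed \<Psi>)"
  shows "p_drop K pc EH Bmax Es Ed \<Psi>
     = (lim (residue_frequency K (K - 1)) - throughput K pc EH Bmax Es Ed \<Psi>)
       / lim (residue_frequency K 0)"
  using limI[OF residue_frequency_drop_tendsto[OF assms]]
  unfolding p_drop_def avg_N_eq_residue_frequency by simp

theorem lemma1:
  fixes K Bmax Es Ed :: nat and EH :: "nat pmf" and F :: "real \<Rightarrow> real"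
    and R ptx Tth :: real and \<Psi>opt :: arq_policy
  assumes "K > 1" and "Es > 0" and "Ed > 0" and "finite (set_pmf EH)"
    and "ptx > 0" and "is_cdf F"
    and limits: "\<And>\<Psi>. admissible Es Ed \<Psi> \<Longrightarrow>
          convergent (avg_S K (p_c F R ptx) EH Bmax Es Ed \<Psi>)
        \<and> convergent (avg_D K (p_c F R ptx) EH Bmax Es Ed \<Psi>)
        \<and> convergent (avg_N K (p_c F R ptx) EH Bmax Es Ed \<Psi>)"
    and opt2: "P2_optimal K (p_c F R ptx) EH Bmax Es Ed \<Psi>opt"
  shows "(throughput K (p_c F R ptx) EH Bmax Es Ed \<Psi>opt < Tth \<longrightarrow>
            \<not> (\<exists>\<Psi>. P1_feasible K (p_c F R ptx) EH Bmax Es Ed Tth \<Psi>))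
       \<and> (\<not> throughput K (p_c F R ptx) EH Bmax Es Ed \<Psi>opt < Tth \<longrightarrow>
            P1_optimal K (p_c F R ptx) EH Bmax Es Ed Tth \<Psi>opt)"
proof -
  define pc where "pc = p_c F R ptx"
  define T where "T = throughput K pc EH Bmax Es Ed"
  have "K > 0" using \<open>K > 1\<close> by simp
  have adm: "admissible Es Ed \<Psi>opt" and T_max: "\<And>\<Phi>. admissible Es Ed \<Phi> \<Longrightarrow> T \<Phi> \<le> T \<Psi>opt"
    using opt2 unfolding P2_optimal_def pc_def T_def by blast+
  have "0 \<le> lim (residue_frequency K 0)"
    using limits[OF adm] unfolding avg_N_eq_residue_frequency convergent_LIMSEQ_iff
    by (auto intro!: LIMSEQ_le_const simp: residue_frequency_def sum_nonneg)
  then have "p_drop K pc EH Bmax Es Ed \<Psi>opt \<le> p_drop K pc EH Bmax Es Ed \<Phi>"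
    if "admissible Es Ed \<Phi>" for \<Phi>
    using p_drop_eq[OF adm \<open>K > 0\<close>] p_drop_eq[OF that \<open>K > 0\<close>] limits[OF adm] limits[OF that]
      T_max[OF that]
    unfolding pc_def T_def by (auto intro!: divide_right_mono)
  with adm T_max show ?thesis
    unfolding P1_optimal_def P1_feasible_def pc_def[symmetric] T_def[symmetric] by force
qed

end
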